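(* Let $\mathcal B$ be the variety generated by all algebras $(L,t)$ where $L$ is a lattice and $t(x,y,z)=x\wedge(y\vee z)$, and let $\mathcal B^d$ be the variety generated by such algebras with $L$ a distributive lattice. Then neither $\mathcal B$ nor $\mathcal B^d$ is $5$-reversed-modular. Moreover the congruence identities $\alpha(\beta\circ\gamma)\subseteq\alpha(\gamma\circ\beta)\circ\alpha(\gamma\circ\beta)$ and $\alpha(\beta\circ\gamma)\subseteq\gamma\circ\alpha\beta\circ\alpha\gamma\circ\beta$ fail both in $\mathcal B$ and in $\mathcal B^d$. In particular neither $\mathcal B$ nor $\mathcal B^d$ is $4$-alvin.
   Context: Reversed Day terms: $4$-ary $u_0,\dots,u_m$ with $u_k(x,y,y,x)=x$ for all $k$, $u_0(x,y,z,w)=x$, $u_m(x,y,z,w)=w$, $u_k(x,x,w,w)=u_{k+1}(x,x,w,w)$ for odd $k$, $u_k(x,y,y,w)=u_{k+1}(x,y,y,w)$ for even $k$ ($0\le k<m$); $m$-reversed-modular means having such $u_0,\dots,u_m$. Alvin terms: ternary $t_0,\dots,t_n$ with $t_0(x,y,z)=x$, $t_n(x,y,z)=z$, $t_h(x,y,x)=x$ for all $h$, $t_h(x,z,z)=t_{h+1}(x,z,z)$ for even $h$, $t_h(x,x,z)=t_{h+1}(x,x,z)$ for odd $h$; $n$-alvin means having such $t_0,\dots,t_n$. In congruence identities juxtaposition is intersection and $\circ$ composition. *)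

theory Defs
  imports Main
begin

datatype trm = Var nat | Op trm trm trm

fun vars :: "trm \<Rightarrow> nat set" where
  "vars (Var i) = {i}"
| "vars (Op a b c) = vars a \<union> vars b \<union> vars c"

fun subst :: "(nat \<Rightarrow> trm) \<Rightarrow> trm \<Rightarrow> trm" where
  "subst \<sigma> (Var i) = \<sigma> i"
| "subst \<sigma> (Op a b c) = Op (subst \<sigma> a) (subst \<sigma> b) (subst \<sigma> c)"

fun eval :: "('a \<Rightarrow> 'a \<Rightarrow> 'a \<Rightarrow> 'a) \<Rightarrow> (nat \<Rightarrow> 'a) \<Rightarrow> trm \<Rightarrow> 'a" where
  "eval f \<rho> (Var i) = \<rho> i"
| "eval f \<rho> (Op a b c) = f (eval f \<rho> a) (eval f \<rho> b) (eval f \<rho> c)"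

definition args3 :: "trm \<Rightarrow> trm \<Rightarrow> trm \<Rightarrow> nat \<Rightarrow> trm" where
  "args3 a b c = (\<lambda>i. if i = 0 then a else if i = 1 then b else c)"

definition args4 :: "trm \<Rightarrow> trm \<Rightarrow> trm \<Rightarrow> trm \<Rightarrow> nat \<Rightarrow> trm" where
  "args4 a b c d = (\<lambda>i. if i = 0 then a else if i = 1 then b else if i = 2 then c else d)"

abbreviation "vx \<equiv> Var 0"
abbreviation "vy \<equiv> Var 1"
abbreviation "vz \<equiv> Var 2"
abbreviation "vw \<equiv> Var 3"

type_synonym 'a alg = "'a set \<times> ('a \<Rightarrow> 'a \<Rightarrow> 'a \<Rightarrow> 'a)"

definition is_alg :: "'a alg \<Rightarrow> bool" where
  "is_alg B \<longleftrightarrow> (\<forall>x\<in>fst B. \<forall>y\<in>fst B. \<forall>z\<in>fst B. snd B x y z \<in> fst B)"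

definition satisfies :: "'a alg \<Rightarrow> trm \<Rightarrow> trm \<Rightarrow> bool" where
  "satisfies B s t \<longleftrightarrow> (\<forall>\<rho>. (\<forall>i. \<rho> i \<in> fst B) \<longrightarrow> eval (snd B) \<rho> s = eval (snd B) \<rho> t)"

text \<open>Variety generated by a class K = Mod(Id(K)) (Birkhoff's HSP theorem).\<close>
definition in_variety :: "'a alg set \<Rightarrow> 'a alg \<Rightarrow> bool" where
  "in_variety K B \<longleftrightarrow> is_alg B \<and>
     (\<forall>s t. (\<forall>C\<in>K. satisfies C s t) \<longrightarrow> satisfies B s t)"

definition var_models :: "'a alg set \<Rightarrow> trm \<Rightarrow> trm \<Rightarrow> bool" where
  "var_models K s t \<longleftrightarrow> (\<forall>B. in_variety K B \<longrightarrow> satisfies B s t)"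

definition reversed_modular :: "'a alg set \<Rightarrow> nat \<Rightarrow> bool" where
  "reversed_modular K m \<longleftrightarrow> (\<exists>u :: nat \<Rightarrow> trm.
     (\<forall>k\<le>m. vars (u k) \<subseteq> {..<4}) \<and>
     (\<forall>k\<le>m. var_models K (subst (args4 vx vy vy vx) (u k)) vx) \<and>
     var_models K (u 0) vx \<and>
     var_models K (u m) vw \<and>
     (\<forall>k<m. odd k \<longrightarrow>
        var_models K (subst (args4 vx vx vw vw) (u k)) (subst (args4 vx vx vw vw) (u (Suc k)))) \<and>
     (\<forall>k<m. even k \<longrightarrow>
        var_models K (subst (args4 vx vy vy vw) (u k)) (subst (args4 vx vy vy vw) (u (Suc k)))))"

definition alvin :: "'a alg set \<Rightarrow> nat \<Rightarrow> bool" where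
  "alvin K n \<longleftrightarrow> (\<exists>t :: nat \<Rightarrow> trm.
     (\<forall>h\<le>n. vars (t h) \<subseteq> {..<3}) \<and>
     var_models K (t 0) vx \<and>
     var_models K (t n) vz \<and>
     (\<forall>h\<le>n. var_models K (subst (args3 vx vy vx) (t h)) vx) \<and>
     (\<forall>h<n. even h \<longrightarrow>
        var_models K (subst (args3 vx vz vz) (t h)) (subst (args3 vx vz vz) (t (Suc h)))) \<and>
     (\<forall>h<n. odd h \<longrightarrow>
        var_models K (subst (args3 vx vx vz) (t h)) (subst (args3 vx vx vz) (t (Suc h)))))"

definition congruence :: "'a alg \<Rightarrow> 'a rel \<Rightarrow> bool" where
  "congruence B \<theta> \<longleftrightarrow> equiv (fst B) \<theta> \<and>
     (\<forall>a a' b b' c c'. (a,a') \<in> \<theta> \<longrightarrow> (b,b') \<in> \<theta> \<longrightarrow> (c,c') \<in> \<theta> \<longrightarrow>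
        (snd B a b c, snd B a' b' c') \<in> \<theta>)"

definition cong_id_fails :: "'a alg set \<Rightarrow> ('a rel \<Rightarrow> 'a rel \<Rightarrow> 'a rel \<Rightarrow> bool) \<Rightarrow> bool" where
  "cong_id_fails K P \<longleftrightarrow> (\<exists>B \<alpha> \<beta> \<gamma>. in_variety K B \<and>
     congruence B \<alpha> \<and> congruence B \<beta> \<and> congruence B \<gamma> \<and> \<not> P \<alpha> \<beta> \<gamma>)"

definition is_lattice :: "'a set \<Rightarrow> ('a \<Rightarrow> 'a \<Rightarrow> 'a) \<Rightarrow> ('a \<Rightarrow> 'a \<Rightarrow> 'a) \<Rightarrow> bool" where
  "is_lattice L m j \<longleftrightarrow> L \<noteq> {} \<and>
     (\<forall>x\<in>L. \<forall>y\<in>L. m x y \<in> L \<and> j x y \<in> L) \<and>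
     (\<forall>x\<in>L. \<forall>y\<in>L. m x y = m y x \<and> j x y = j y x) \<and>
     (\<forall>x\<in>L. \<forall>y\<in>L. \<forall>z\<in>L. m (m x y) z = m x (m y z) \<and> j (j x y) z = j x (j y z)) \<and>
     (\<forall>x\<in>L. \<forall>y\<in>L. m x (j x y) = x \<and> j x (m x y) = x)"

definition is_distrib_lattice :: "'a set \<Rightarrow> ('a \<Rightarrow> 'a \<Rightarrow> 'a) \<Rightarrow> ('a \<Rightarrow> 'a \<Rightarrow> 'a) \<Rightarrow> bool" where
  "is_distrib_lattice L m j \<longleftrightarrow> is_lattice L m j \<and>
     (\<forall>x\<in>L. \<forall>y\<in>L. \<forall>z\<in>L. m x (j y z) = j (m x y) (m x z))"

definition KB :: "nat alg set" where
  "KB = {(L, \<lambda>x y z. m x (j y z)) | L m j. is_lattice L m j}"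

definition KBd :: "nat alg set" where
  "KBd = {(L, \<lambda>x y z. m x (j y z)) | L m j. is_distrib_lattice L m j}"

definition cid1 :: "'a rel \<Rightarrow> 'a rel \<Rightarrow> 'a rel \<Rightarrow> bool" where
  "cid1 \<alpha> \<beta> \<gamma> \<longleftrightarrow> \<alpha> \<inter> (\<beta> O \<gamma>) \<subseteq> (\<alpha> \<inter> (\<gamma> O \<beta>)) O (\<alpha> \<inter> (\<gamma> O \<beta>))"

definition cid2 :: "'a rel \<Rightarrow> 'a rel \<Rightarrow> 'a rel \<Rightarrow> bool" where
  "cid2 \<alpha> \<beta> \<gamma> \<longleftrightarrow> \<alpha> \<inter> (\<beta> O \<gamma>) \<subseteq> \<gamma> O (\<alpha> \<inter> \<beta>) O (\<alpha> \<inter> \<gamma>) O \<beta>"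

end

theory Submission
  imports Defs
begin

text \<open>Natural numbers under bitwise AND and OR form a distributive lattice (finite subsets of \<nat>),
  so the algebra \<open>(\<nat>, x AND (y OR z))\<close> and all its subalgebras lie in both varieties, and
  kernels of bit masks are congruences of every subalgebra, since the operation acts bitwise.
  In an algebra of a variety with reversed Day terms \<open>u\<^sub>0, \<dots>, u\<^sub>m\<close>, applying the terms to
  \<open>a \<beta> b (\<alpha>\<gamma>) c \<beta> d\<close> with \<open>a \<alpha> d\<close> yields a path from \<open>a\<close> to \<open>d\<close> alternating between \<open>\<alpha>\<gamma>\<close> and
  \<open>\<alpha>\<beta>\<close>, with \<open>m\<close> steps; Alvin terms do the same for \<open>a \<beta> b \<gamma> c\<close> with \<open>a \<alpha> c\<close>. A computation in
  an 11-element and in a 10-element subalgebra shows that such paths of length 5, resp. 4, need not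
  exist, and the 10-element one also violates both congruence identities.\<close>

unbundle bit_operations_syntax

lemma eval_subst: "eval f \<rho> (subst \<sigma> s) = eval f (\<lambda>i. eval f \<rho> (\<sigma> i)) s"
  by (induction s) auto

lemma congruence_refl: "congruence A \<theta> \<Longrightarrow> x \<in> fst A \<Longrightarrow> (x, x) \<in> \<theta>"
  unfolding congruence_def equiv_def refl_on_def by blast

lemma congruence_sym: "congruence A \<theta> \<Longrightarrow> (x, y) \<in> \<theta> \<Longrightarrow> (y, x) \<in> \<theta>"
  unfolding congruence_def equiv_def sym_def by blast

lemma congruence_trans: "congruence A \<theta> \<Longrightarrow> (x, y) \<in> \<theta> \<Longrightarrow> (y, z) \<in> \<theta> \<Longrightarrow> (x, z) \<in> \<theta>"
  unfolding congruence_def equiv_def trans_def by blast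

lemma congruence_eval:
  assumes "congruence A \<theta>" "\<And>i. (\<rho> i, \<rho>' i) \<in> \<theta>"
  shows "(eval (snd A) \<rho> s, eval (snd A) \<rho>' s) \<in> \<theta>"
  using assms by (induction s) (auto simp: congruence_def)

lemma congruence_eval_transfer:
  assumes \<theta>: "congruence A \<theta>" and "\<And>i. (\<rho> i, \<rho>' i) \<in> \<theta>"
    and "eval (snd A) \<rho>' s = eval (snd A) \<rho>' t"
  shows "(eval (snd A) \<rho> s, eval (snd A) \<rho> t) \<in> \<theta>"
proof -
  have "(eval (snd A) \<rho> s, eval (snd A) \<rho>' s) \<in> \<theta>" "(eval (snd A) \<rho>' t, eval (snd A) \<rho> t) \<in> \<theta>"
    using congruence_eval[OF \<theta>] congruence_sym[OF \<theta>] assms(2) by blast+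
  then show ?thesis
    using assms(3) congruence_trans[OF \<theta>] by metis
qed

lemma var_models_eval:
  assumes "var_models K s t" "in_variety K A" "\<And>i. \<rho> i \<in> fst A"
  shows "eval (snd A) \<rho> s = eval (snd A) \<rho> t"
  using assms unfolding var_models_def satisfies_def by blast

definition tuple3 :: "'a \<Rightarrow> 'a \<Rightarrow> 'a \<Rightarrow> nat \<Rightarrow> 'a" where
  "tuple3 a b c i = (if i = 0 then a else if i = 1 then b else c)"

definition tuple4 :: "'a \<Rightarrow> 'a \<Rightarrow> 'a \<Rightarrow> 'a \<Rightarrow> nat \<Rightarrow> 'a" where
  "tuple4 a b c d i = (if i = 0 then a else if i = 1 then b else if i = 2 then c else d)"

lemma tuple3_simps [simp]:
  "tuple3 a b c 0 = a" "tuple3 a b c (Suc 0) = b" "tuple3 a b c 2 = c"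
  by (simp_all add: tuple3_def)

lemma tuple4_simps [simp]:
  "tuple4 a b c d 0 = a" "tuple4 a b c d (Suc 0) = b" "tuple4 a b c d 2 = c" "tuple4 a b c d 3 = d"
  by (simp_all add: tuple4_def)

lemma eval_args3_tuple3 [simp]:
  "(\<lambda>i. eval f (tuple3 a b c) (args3 (Var p) (Var q) (Var r) i))
     = tuple3 (tuple3 a b c p) (tuple3 a b c q) (tuple3 a b c r)"
  by (auto simp: args3_def tuple3_def)

lemma eval_args4_tuple4 [simp]:
  "(\<lambda>i. eval f (tuple4 a b c d) (args4 (Var p) (Var q) (Var r) (Var s) i))
     = tuple4 (tuple4 a b c d p) (tuple4 a b c d q) (tuple4 a b c d r) (tuple4 a b c d s)"
  by (auto simp: args4_def tuple4_def)

lemma tuple3_in: "a \<in> S \<Longrightarrow> b \<in> S \<Longrightarrow> c \<in> S \<Longrightarrow> tuple3 a b c i \<in> S"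
  by (simp add: tuple3_def)

lemma tuple4_in: "a \<in> S \<Longrightarrow> b \<in> S \<Longrightarrow> c \<in> S \<Longrightarrow> d \<in> S \<Longrightarrow> tuple4 a b c d i \<in> S"
  by (simp add: tuple4_def)

lemma tuple3_rel:
  "(a, a') \<in> \<theta> \<Longrightarrow> (b, b') \<in> \<theta> \<Longrightarrow> (c, c') \<in> \<theta> \<Longrightarrow> (tuple3 a b c i, tuple3 a' b' c' i) \<in> \<theta>"
  by (simp add: tuple3_def)

lemma tuple4_rel:
  "(a, a') \<in> \<theta> \<Longrightarrow> (b, b') \<in> \<theta> \<Longrightarrow> (c, c') \<in> \<theta> \<Longrightarrow> (d, d') \<in> \<theta> \<Longrightarrow>
    (tuple4 a b c d i, tuple4 a' b' c' d' i) \<in> \<theta>"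
  by (simp add: tuple4_def)

fun zigzag :: "'a rel \<Rightarrow> 'a rel \<Rightarrow> nat \<Rightarrow> 'a rel" where
  "zigzag R S 0 = Id"
| "zigzag R S (Suc n) = zigzag R S n O (if even n then R else S)"

lemma zigzag_path:
  assumes "\<And>k. k < n \<Longrightarrow> (x k, x (Suc k)) \<in> (if even k then R else S)"
  shows "(x 0, x n) \<in> zigzag R S n"
  using assms
proof (induction n)
  case (Suc n)
  then have "(x 0, x n) \<in> zigzag R S n" "(x n, x (Suc n)) \<in> (if even n then R else S)"
    by simp_all
  then show ?case by auto
qed simp

text \<open>The common core of the Day-type arguments: the tuples \<open>\<rho>\<alpha>, \<rho>\<beta>, \<rho>\<gamma>\<close> turn the term identities
  into \<open>\<alpha>\<close>-, \<open>\<beta>\<close>- and \<open>\<gamma>\<close>-steps between consecutive values of the terms at \<open>\<rho>\<close>.\<close>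
lemma eval_zigzag:
  assumes \<alpha>: "congruence A \<alpha>" and \<beta>: "congruence A \<beta>" and \<gamma>: "congruence A \<gamma>"
    and \<rho>\<alpha>: "\<And>i. (\<rho> i, \<rho>\<alpha> i) \<in> \<alpha>" and \<rho>\<beta>: "\<And>i. (\<rho> i, \<rho>\<beta> i) \<in> \<beta>"
    and \<rho>\<gamma>: "\<And>i. (\<rho> i, \<rho>\<gamma> i) \<in> \<gamma>"
    and const: "\<And>k. k \<le> n \<Longrightarrow> eval (snd A) \<rho>\<alpha> (w k) = p"
    and odd_eq: "\<And>k. k < n \<Longrightarrow> odd k \<Longrightarrow> eval (snd A) \<rho>\<beta> (w k) = eval (snd A) \<rho>\<beta> (w (Suc k))"
    and even_eq: "\<And>k. k < n \<Longrightarrow> even k \<Longrightarrow> eval (snd A) \<rho>\<gamma> (w k) = eval (snd A) \<rho>\<gamma> (w (Suc k))"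
  shows "(eval (snd A) \<rho> (w 0), eval (snd A) \<rho> (w n)) \<in> zigzag (\<alpha> \<inter> \<gamma>) (\<alpha> \<inter> \<beta>) n"
proof (rule zigzag_path)
  fix k assume k: "k < n"
  have "eval (snd A) \<rho>\<alpha> (w k) = eval (snd A) \<rho>\<alpha> (w (Suc k))"
    using const k by simp
  then have "(eval (snd A) \<rho> (w k), eval (snd A) \<rho> (w (Suc k))) \<in> \<alpha>"
    using \<rho>\<alpha> by (rule congruence_eval_transfer[OF \<alpha>, rotated])
  moreover have "(eval (snd A) \<rho> (w k), eval (snd A) \<rho> (w (Suc k))) \<in> \<beta>" if "odd k"
    using \<rho>\<beta> odd_eq[OF k that] by (rule congruence_eval_transfer[OF \<beta>])
  moreover have "(eval (snd A) \<rho> (w k), eval (snd A) \<rho> (w (Suc k))) \<in> \<gamma>" if "even k"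
    using \<rho>\<gamma> even_eq[OF k that] by (rule congruence_eval_transfer[OF \<gamma>])
  ultimately show "(eval (snd A) \<rho> (w k), eval (snd A) \<rho> (w (Suc k)))
      \<in> (if even k then \<alpha> \<inter> \<gamma> else \<alpha> \<inter> \<beta>)"
    by simp
qed

lemma reversed_modular_zigzag:
  assumes "reversed_modular K m" and V: "in_variety K A"
    and \<alpha>: "congruence A \<alpha>" and \<beta>: "congruence A \<beta>" and \<gamma>: "congruence A \<gamma>"
    and carrier: "a \<in> fst A" "b \<in> fst A" "c \<in> fst A" "d \<in> fst A"
    and ab: "(a, b) \<in> \<beta>" and bc: "(b, c) \<in> \<alpha> \<inter> \<gamma>" and cd: "(c, d) \<in> \<beta>" and ad: "(a, d) \<in> \<alpha>"
  shows "(a, d) \<in> zigzag (\<alpha> \<inter> \<gamma>) (\<alpha> \<inter> \<beta>) m"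
proof -
  obtain u where
    u_xyyx: "\<forall>k\<le>m. var_models K (subst (args4 vx vy vy vx) (u k)) vx" and
    u_first: "var_models K (u 0) vx" and u_last: "var_models K (u m) vw" and
    u_odd: "\<forall>k<m. odd k \<longrightarrow>
        var_models K (subst (args4 vx vx vw vw) (u k)) (subst (args4 vx vx vw vw) (u (Suc k)))" and
    u_even: "\<forall>k<m. even k \<longrightarrow>
        var_models K (subst (args4 vx vy vy vw) (u k)) (subst (args4 vx vy vy vw) (u (Suc k)))"
    using assms(1) unfolding reversed_modular_def by blast
  have \<rho>_in: "\<And>i. tuple4 a b c d i \<in> fst A"
    using carrier by (rule tuple4_in)
  have identity: "eval (snd A) (tuple4 a b c d) s = eval (snd A) (tuple4 a b c d) t"
    if "var_models K s t" for s t
    using that V \<rho>_in by (rule var_models_eval)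
  have refl: "(x, x) \<in> \<theta>" if "congruence A \<theta>" "x \<in> {a, b, c, d}" for \<theta> x
    using that(2) carrier congruence_refl[OF that(1)] by auto
  have "(eval (snd A) (tuple4 a b c d) (u 0), eval (snd A) (tuple4 a b c d) (u m))
      \<in> zigzag (\<alpha> \<inter> \<gamma>) (\<alpha> \<inter> \<beta>) m"
  proof (rule eval_zigzag[OF \<alpha> \<beta> \<gamma>])
    show "(tuple4 a b c d i, tuple4 a b b a i) \<in> \<alpha>"
      "(tuple4 a b c d i, tuple4 a a d d i) \<in> \<beta>"
      "(tuple4 a b c d i, tuple4 a b b d i) \<in> \<gamma>" for i
      using refl[OF \<alpha>] refl[OF \<beta>] refl[OF \<gamma>] congruence_sym[OF \<beta> ab]
        congruence_sym[OF \<alpha> IntD1[OF bc]] congruence_sym[OF \<gamma> IntD2[OF bc]]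
        congruence_sym[OF \<alpha> ad] cd
      by (simp_all add: tuple4_rel)
    show "eval (snd A) (tuple4 a b b a) (u k) = a" if "k \<le> m" for k
      using identity[OF u_xyyx[rule_format, OF that]] by (simp add: eval_subst)
    show "eval (snd A) (tuple4 a a d d) (u k) = eval (snd A) (tuple4 a a d d) (u (Suc k))"
      if "k < m" "odd k" for k
      using identity[OF u_odd[rule_format, OF that]] by (simp add: eval_subst)
    show "eval (snd A) (tuple4 a b b d) (u k) = eval (snd A) (tuple4 a b b d) (u (Suc k))"
      if "k < m" "even k" for k
      using identity[OF u_even[rule_format, OF that]] by (simp add: eval_subst)
  qed
  then show ?thesis
    using identity[OF u_first] identity[OF u_last] by simp
qed

lemma alvin_zigzag:
  assumes "alvin K n" and V: "in_variety K A"
    and \<alpha>: "congruence A \<alpha>" and \<beta>: "congruence A \<beta>" and \<gamma>: "congruence A \<gamma>"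
    and carrier: "a \<in> fst A" "b \<in> fst A" "c \<in> fst A"
    and ab: "(a, b) \<in> \<beta>" and bc: "(b, c) \<in> \<gamma>" and ac: "(a, c) \<in> \<alpha>"
  shows "(a, c) \<in> zigzag (\<alpha> \<inter> \<gamma>) (\<alpha> \<inter> \<beta>) n"
proof -
  obtain t where
    t_first: "var_models K (t 0) vx" and t_last: "var_models K (t n) vz" and
    t_xyx: "\<forall>h\<le>n. var_models K (subst (args3 vx vy vx) (t h)) vx" and
    t_even: "\<forall>h<n. even h \<longrightarrow>
        var_models K (subst (args3 vx vz vz) (t h)) (subst (args3 vx vz vz) (t (Suc h)))" and
    t_odd: "\<forall>h<n. odd h \<longrightarrow>
        var_models K (subst (args3 vx vx vz) (t h)) (subst (args3 vx vx vz) (t (Suc h)))"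
    using assms(1) unfolding alvin_def by blast
  have \<rho>_in: "\<And>i. tuple3 a b c i \<in> fst A"
    using carrier by (rule tuple3_in)
  have identity: "eval (snd A) (tuple3 a b c) s = eval (snd A) (tuple3 a b c) s'"
    if "var_models K s s'" for s s'
    using that V \<rho>_in by (rule var_models_eval)
  have refl: "(x, x) \<in> \<theta>" if "congruence A \<theta>" "x \<in> {a, b, c}" for \<theta> x
    using that(2) carrier congruence_refl[OF that(1)] by auto
  have "(eval (snd A) (tuple3 a b c) (t 0), eval (snd A) (tuple3 a b c) (t n))
      \<in> zigzag (\<alpha> \<inter> \<gamma>) (\<alpha> \<inter> \<beta>) n"
  proof (rule eval_zigzag[OF \<alpha> \<beta> \<gamma>])
    show "(tuple3 a b c i, tuple3 a b a i) \<in> \<alpha>"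
      "(tuple3 a b c i, tuple3 a a c i) \<in> \<beta>"
      "(tuple3 a b c i, tuple3 a c c i) \<in> \<gamma>" for i
      using refl[OF \<alpha>] refl[OF \<beta>] refl[OF \<gamma>] congruence_sym[OF \<beta> ab]
        congruence_sym[OF \<alpha> ac] bc
      by (simp_all add: tuple3_rel)
    show "eval (snd A) (tuple3 a b a) (t h) = a" if "h \<le> n" for h
      using identity[OF t_xyx[rule_format, OF that]] by (simp add: eval_subst)
    show "eval (snd A) (tuple3 a a c) (t h) = eval (snd A) (tuple3 a a c) (t (Suc h))"
      if "h < n" "odd h" for h
      using identity[OF t_odd[rule_format, OF that]] by (simp add: eval_subst)
    show "eval (snd A) (tuple3 a c c) (t h) = eval (snd A) (tuple3 a c c) (t (Suc h))"
      if "h < n" "even h" for h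
      using identity[OF t_even[rule_format, OF that]] by (simp add: eval_subst)
  qed
  then show ?thesis
    using identity[OF t_first] identity[OF t_last] by simp
qed


definition bit_t :: "nat \<Rightarrow> nat \<Rightarrow> nat \<Rightarrow> nat" where
  "bit_t x y z = x AND (y OR z)"

lemma distrib_lattice_bits: "is_distrib_lattice (UNIV :: nat set) (AND) (OR)"
  unfolding is_distrib_lattice_def is_lattice_def
  by (auto simp: and.commute or.commute and.assoc or.assoc intro!: bit_eqI simp: bit_and_iff bit_or_iff)

lemma bits_in_KBd: "(UNIV, bit_t) \<in> KBd"
  unfolding KBd_def bit_t_def[abs_def] using distrib_lattice_bits by blast

lemma bits_in_KB: "(UNIV, bit_t) \<in> KB"
  unfolding KB_def bit_t_def[abs_def] using distrib_lattice_bits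
  unfolding is_distrib_lattice_def by blast

lemma subalgebra_in_variety:
  assumes "(A, f) \<in> K" "S \<subseteq> A" "is_alg (S, f)"
  shows "in_variety K (S, f)"
  using assms unfolding in_variety_def satisfies_def by (auto simp: subset_iff)

definition mask_kernel :: "nat set \<Rightarrow> nat \<Rightarrow> nat rel" where
  "mask_kernel S m = {(u, v). u \<in> S \<and> v \<in> S \<and> u AND m = v AND m}"

lemma bit_t_mask: "bit_t x y z AND m = bit_t (x AND m) (y AND m) (z AND m) AND m"
  unfolding bit_t_def by (auto intro!: bit_eqI simp: bit_and_iff bit_or_iff)

lemma mask_kernel_congruence:
  assumes "is_alg (S, bit_t)"
  shows "congruence (S, bit_t) (mask_kernel S m)"
  using assms bit_t_mask[of _ _ _ m]
  unfolding congruence_def is_alg_def mask_kernel_def equiv_def refl_on_def sym_def trans_def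
  by (auto; metis)

lemma mask_kernel_Int: "mask_kernel S m \<inter> mask_kernel S m' = mask_kernel S (m OR m')"
  unfolding mask_kernel_def by (auto simp: bit_eq_iff bit_and_iff bit_or_iff)

lemma mask_kernel_Image: "mask_kernel S m `` X = S \<inter> {v. \<exists>u\<in>X \<inter> S. v AND m = u AND m}"
  unfolding mask_kernel_def by (auto simp: eq_commute)

lemma Int_Image: "(R \<inter> S) `` X = (\<Union>x\<in>X. R `` {x} \<inter> S `` {x})"
  by auto

lemma zigzag_numeral:
  "zigzag R S (numeral k) = zigzag R S (pred_numeral k) O (if even (pred_numeral k) then R else S)"
  by (simp add: numeral_eq_Suc)


definition carrier10 :: "nat set" where
  "carrier10 = {128, 136, 160, 168, 170, 192, 200, 204, 224, 240}"

definition carrier11 :: "nat set" where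
  "carrier11 = {0, 2, 4, 6, 10, 14, 16, 18, 20, 21, 46}"

lemma is_alg_carrier10: "is_alg (carrier10, bit_t)"
  by (simp add: is_alg_def carrier10_def bit_t_def)

lemma is_alg_carrier11: "is_alg (carrier11, bit_t)"
  by (simp add: is_alg_def carrier11_def bit_t_def)

lemma carrier11_not_zigzag:
  defines "\<theta> \<equiv> mask_kernel carrier11"
  shows "(21, 46) \<notin> zigzag (\<theta> 4 \<inter> \<theta> 39) (\<theta> 4 \<inter> \<theta> 24) 5"
  unfolding \<theta>_def Image_singleton_iff[symmetric]
  by (simp add: zigzag_numeral relcomp_Image mask_kernel_Int mask_kernel_Image carrier11_def)

lemma carrier10_not_zigzag:
  defines "\<theta> \<equiv> mask_kernel carrier10"
  shows "(240, 170) \<notin> zigzag (\<theta> 165 \<inter> \<theta> 153) (\<theta> 165 \<inter> \<theta> 195) 4"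
  unfolding \<theta>_def Image_singleton_iff[symmetric]
  by (simp add: zigzag_numeral relcomp_Image mask_kernel_Int mask_kernel_Image carrier10_def)

lemma carrier10_in_cid_lhs:
  "(240, 170) \<in> mask_kernel carrier10 165 \<inter> (mask_kernel carrier10 195 O mask_kernel carrier10 153)"
  by (auto simp: mask_kernel_def carrier10_def intro!: relcompI[where b = 204])

lemma carrier10_not_cid1:
  defines "\<theta> \<equiv> mask_kernel carrier10"
  shows "\<not> cid1 (\<theta> 165) (\<theta> 195) (\<theta> 153)"
proof -
  have "(240, 170) \<notin> (\<theta> 165 \<inter> (\<theta> 153 O \<theta> 195)) O (\<theta> 165 \<inter> (\<theta> 153 O \<theta> 195))"
    unfolding \<theta>_def Image_singleton_iff[symmetric]
    by (simp add: relcomp_Image Int_Image mask_kernel_Image carrier10_def)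
  moreover have "(240, 170) \<in> \<theta> 165 \<inter> (\<theta> 195 O \<theta> 153)"
    unfolding \<theta>_def by (rule carrier10_in_cid_lhs)
  ultimately show ?thesis
    unfolding cid1_def by blast
qed

lemma carrier10_not_cid2:
  defines "\<theta> \<equiv> mask_kernel carrier10"
  shows "\<not> cid2 (\<theta> 165) (\<theta> 195) (\<theta> 153)"
proof -
  have "(240, 170) \<notin> \<theta> 153 O (\<theta> 165 \<inter> \<theta> 195) O (\<theta> 165 \<inter> \<theta> 153) O \<theta> 195"
    unfolding \<theta>_def Image_singleton_iff[symmetric]
    by (simp add: relcomp_Image mask_kernel_Int mask_kernel_Image carrier10_def)
  moreover have "(240, 170) \<in> \<theta> 165 \<inter> (\<theta> 195 O \<theta> 153)"
    unfolding \<theta>_def by (rule carrier10_in_cid_lhs)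
  ultimately show ?thesis
    unfolding cid2_def by blast
qed

lemma carrier10_in_variety: "(UNIV, bit_t) \<in> K \<Longrightarrow> in_variety K (carrier10, bit_t)"
  using subalgebra_in_variety[OF _ subset_UNIV is_alg_carrier10] .

lemma carrier11_in_variety: "(UNIV, bit_t) \<in> K \<Longrightarrow> in_variety K (carrier11, bit_t)"
  using subalgebra_in_variety[OF _ subset_UNIV is_alg_carrier11] .

lemma not_reversed_modular_5:
  assumes "(UNIV, bit_t) \<in> K"
  shows "\<not> reversed_modular K 5"
proof
  assume "reversed_modular K 5"
  let ?\<theta> = "mask_kernel carrier11"
  have "(21, 46) \<in> zigzag (?\<theta> 4 \<inter> ?\<theta> 39) (?\<theta> 4 \<inter> ?\<theta> 24) 5"
    using \<open>reversed_modular K 5\<close> carrier11_in_variety[OF assms]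
      mask_kernel_congruence[OF is_alg_carrier11] mask_kernel_congruence[OF is_alg_carrier11]
      mask_kernel_congruence[OF is_alg_carrier11]
    by (rule reversed_modular_zigzag[where b = 18 and c = 10])
      (simp_all add: mask_kernel_def carrier11_def)
  with carrier11_not_zigzag show False
    by blast
qed

lemma not_alvin_4:
  assumes "(UNIV, bit_t) \<in> K"
  shows "\<not> alvin K 4"
proof
  assume "alvin K 4"
  let ?\<theta> = "mask_kernel carrier10"
  have "(240, 170) \<in> zigzag (?\<theta> 165 \<inter> ?\<theta> 153) (?\<theta> 165 \<inter> ?\<theta> 195) 4"
    using \<open>alvin K 4\<close> carrier10_in_variety[OF assms]
      mask_kernel_congruence[OF is_alg_carrier10] mask_kernel_congruence[OF is_alg_carrier10]
      mask_kernel_congruence[OF is_alg_carrier10]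
    by (rule alvin_zigzag[where b = 204])
      (simp_all add: mask_kernel_def carrier10_def)
  with carrier10_not_zigzag show False
    by blast
qed

lemma cong_id_fails_cid1: "(UNIV, bit_t) \<in> K \<Longrightarrow> cong_id_fails K cid1"
  unfolding cong_id_fails_def
  using carrier10_in_variety mask_kernel_congruence[OF is_alg_carrier10] carrier10_not_cid1
  by blast

lemma cong_id_fails_cid2: "(UNIV, bit_t) \<in> K \<Longrightarrow> cong_id_fails K cid2"
  unfolding cong_id_fails_def
  using carrier10_in_variety mask_kernel_congruence[OF is_alg_carrier10] carrier10_not_cid2
  by blast

theorem proposition3p6:
  shows "\<not> reversed_modular KB 5 \<and> \<not> reversed_modular KBd 5 \<and>
         cong_id_fails KB cid1 \<and> cong_id_fails KBd cid1 \<and>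
         cong_id_fails KB cid2 \<and> cong_id_fails KBd cid2 \<and>
         \<not> alvin KB 4 \<and> \<not> alvin KBd 4"
  using bits_in_KB bits_in_KBd
  by (simp add: not_reversed_modular_5 not_alvin_4 cong_id_fails_cid1 cong_id_fails_cid2)

end
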